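(* Let $\alpha,\beta\in[0,1)$ and let $\lambda$ be a zero of $\mathcal D(\beta,\cdot)$. Set $\mathcal H(\alpha,\beta,x)=A(\alpha,\beta,\lambda)-A(\alpha,\beta,x)+64\mathcal D(\beta,x)(1-x)$. Then $\lambda$ is a multiple zero of $\mathcal H(\alpha,\beta,\cdot)$ if and only if $$8(\lambda-1)\Big(1-2\big(\lambda^2-2\lambda(3-\lambda)+\tfrac{45}{16}\big)\Big)=\cos(2\pi\alpha).$$
   Context: $A(\alpha,\beta,\lambda)=16\lambda^2-(32+4\cos2\pi\alpha)\lambda+15+4\cos2\pi\alpha+\cos(2\pi(\alpha+\beta))$; $\mathcal D(\beta,\lambda)=-\lambda^3+3\lambda^2-\frac{45}{16}\lambda+\frac{13}{16}-\frac1{32}\cos(2\pi\beta)$. *)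

theory Defs
  imports Complex_Main "HOL-Computational_Algebra.Polynomial"
begin

definition A :: "real \<Rightarrow> real \<Rightarrow> real \<Rightarrow> real" where
  "A \<alpha> \<beta> lam = 16 * lam^2 - (32 + 4 * cos (2*pi*\<alpha>)) * lam + 15 + 4 * cos (2*pi*\<alpha>)
      + cos (2*pi*(\<alpha>+\<beta>))"

definition D :: "real \<Rightarrow> real \<Rightarrow> real" where
  "D \<beta> lam = - (lam^3) + 3 * lam^2 - 45/16 * lam + 13/16 - 1/32 * cos (2*pi*\<beta>)"

definition A_poly :: "real \<Rightarrow> real \<Rightarrow> real poly" where
  "A_poly \<alpha> \<beta> = [: 15 + 4 * cos (2*pi*\<alpha>) + cos (2*pi*(\<alpha>+\<beta>)), - (32 + 4 * cos (2*pi*\<alpha>)), 16 :]"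

definition D_poly :: "real \<Rightarrow> real poly" where
  "D_poly \<beta> = [: 13/16 - 1/32 * cos (2*pi*\<beta>), -45/16, 3, -1 :]"

definition H_poly :: "real \<Rightarrow> real \<Rightarrow> real \<Rightarrow> real poly" where
  "H_poly \<alpha> \<beta> lam = [: A \<alpha> \<beta> lam :] - A_poly \<alpha> \<beta> + smult 64 (D_poly \<beta> * [: 1, -1 :])"

lemma poly_A_poly: "poly (A_poly \<alpha> \<beta>) x = A \<alpha> \<beta> x"
  by (simp add: A_poly_def A_def power2_eq_square algebra_simps)

lemma poly_D_poly: "poly (D_poly \<beta>) x = D \<beta> x"
  by (simp add: D_poly_def D_def power2_eq_square power3_eq_cube algebra_simps)

lemma poly_H_poly:
  "poly (H_poly \<alpha> \<beta> lam) x = A \<alpha> \<beta> lam - A \<alpha> \<beta> x + 64 * D \<beta> x * (1 - x)"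
  by (simp add: H_poly_def poly_A_poly poly_D_poly algebra_simps)

end

theory Submission
  imports Defs
begin

text \<open>Since \<open>\<lambda>\<close> is a root of \<open>\<H>(\<alpha>,\<beta>,\<cdot>)\<close> (the first two terms cancel and \<open>\<D>(\<beta>,\<lambda>) = 0\<close>),
  it is a multiple root exactly when it is a root of the derivative
  \<open>\<H>' = -A' + 64 (\<D>' (1 - x) - \<D>)\<close>. At \<open>x = \<lambda>\<close> the last term vanishes again, and solving
  \<open>\<H>'(\<lambda>) = 0\<close> for \<open>cos (2\<pi>\<alpha>)\<close> gives the stated identity.\<close>

lemma order_ge_2_iff_poly_pderiv:
  fixes p :: "'a::{idom,semiring_char_0} poly"
  assumes "p \<noteq> 0" and "poly p x = 0"
  shows "2 \<le> order x p \<longleftrightarrow> poly (pderiv p) x = 0"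
proof -
  have "pderiv p \<noteq> 0"
  proof
    assume "pderiv p = 0"
    then obtain c where "p = [:c:]" by (metis degree_eq_zeroE pderiv_eq_0_iff)
    with assms show False by simp
  qed
  then have "order x (pderiv p) \<noteq> 0 \<longleftrightarrow> poly (pderiv p) x = 0"
    using order_root by blast
  then show ?thesis
    using order_pderiv[OF assms] by auto
qed

lemma H_poly_nonzero: "H_poly \<alpha> \<beta> lam \<noteq> 0"
proof -
  have "coeff (H_poly \<alpha> \<beta> lam) 4 = 64"
    by (simp add: H_poly_def A_poly_def D_poly_def coeff_mult numeral_eq_Suc)
  then show ?thesis by auto
qed

lemma poly_pderiv_H_poly:
  "poly (pderiv (H_poly \<alpha> \<beta> lam)) x =
     - (32 * x - 32 - 4 * cos (2*pi*\<alpha>)) + 64 * (- 3 * x^2 + 6 * x - 45/16) * (1 - x)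
     - 64 * D \<beta> x"
  by (simp add: H_poly_def A_poly_def D_poly_def D_def pderiv_add pderiv_diff pderiv_smult
      pderiv_mult pderiv_pCons algebra_simps power2_eq_square power3_eq_cube)

theorem lemma4p6:
  fixes \<alpha> \<beta> lam :: real
  assumes "0 \<le> \<alpha>" "\<alpha> < 1" "0 \<le> \<beta>" "\<beta> < 1"
    and "D \<beta> lam = 0"
  shows "order lam (H_poly \<alpha> \<beta> lam) \<ge> 2 \<longleftrightarrow>
         8 * (lam - 1) * (1 - 2 * (lam^2 - 2 * lam * (3 - lam) + 45/16)) = cos (2*pi*\<alpha>)"
proof -
  have root: "poly (H_poly \<alpha> \<beta> lam) lam = 0"
    using assms(5) by (simp add: poly_H_poly)
  have "order lam (H_poly \<alpha> \<beta> lam) \<ge> 2 \<longleftrightarrow> poly (pderiv (H_poly \<alpha> \<beta> lam)) lam = 0"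
    using order_ge_2_iff_poly_pderiv[OF H_poly_nonzero root] .
  also have "\<dots> \<longleftrightarrow>
      8 * (lam - 1) * (1 - 2 * (lam^2 - 2 * lam * (3 - lam) + 45/16)) = cos (2*pi*\<alpha>)"
    unfolding poly_pderiv_H_poly assms(5) by (simp add: field_simps power2_eq_square) linarith
  finally show ?thesis .
qed

end
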